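(* Let $(X,Y)$ be a pair of continuous random variables with joint distribution function $H$, marginal distribution functions $F$ (of $X$) and $G$ (of $Y$), and copula $C$, so that $H(x,y)=C(F(x),G(y))$. For $p,q\in[0,1]$ define $$\lambda_{Y|X}(q|p)=\lim_{t\to 0^+} P\{G^{-1}((q-t)^+)<Y\le G^{-1}((q+t)^-)\mid F^{-1}((p-t)^+)<X\le F^{-1}((p+t)^-)\},$$ $$\lambda_{X|Y}(p|q)=\lim_{t\to 0^+} P\{F^{-1}((p-t)^+)<X\le F^{-1}((p+t)^-)\mid G^{-1}((q-t)^+)<Y\le G^{-1}((q+t)^-)\}.$$ Then for $p,q\in[0,1]$, $$\lambda_{Y|X}(q|p)=\lim_{t\to0^+}\frac{V_C([(p-t)^+,(p+t)^-]\times[(q-t)^+,(q+t)^-])}{(p+t)^- - (p-t)^+},\qquad \lambda_{X|Y}(p|q)=\lim_{t\to0^+}\frac{V_C([(p-t)^+,(p+t)^-]\times[(q-t)^+,(q+t)^-])}{(q+t)^- - (q-t)^+},$$ provided the limits exist.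
   Context: For real $a$, $a^+=\max(a,0)$ and $a^-=1-(1-a)^+$. For a distribution function $F$, $F^{-1}(u)=\inf\{x\in\mathbb{R}:F(x)\ge u\}$ is its generalized inverse (quantile function). A copula is a bivariate distribution function on $[0,1]^2$ with uniform$(0,1)$ margins. For $0\le u_1\le u_2\le1$, $0\le v_1\le v_2\le 1$, the $C$-volume is $V_C([u_1,u_2]\times[v_1,v_2])=C(u_2,v_2)-C(u_2,v_1)-C(u_1,v_2)+C(u_1,v_1)$. *)

theory Defs
  imports "HOL-Probability.Probability"
begin

definition pos_part :: "real \<Rightarrow> real" where
  "pos_part a = max a 0"

definition neg_part :: "real \<Rightarrow> real" where
  "neg_part a = 1 - pos_part (1 - a)"

text \<open>Generalized inverse, valued in the extended reals (so that the infimum of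
  all reals is -infinity and the infimum of the empty set is +infinity).\<close>
definition quantile :: "(real \<Rightarrow> real) \<Rightarrow> real \<Rightarrow> ereal" where
  "quantile F u = Inf {ereal x | x. F x \<ge> u}"

definition is_copula :: "(real \<Rightarrow> real \<Rightarrow> real) \<Rightarrow> bool" where
  "is_copula C \<longleftrightarrow>
     (\<forall>u\<in>{0..1}. C u 0 = 0 \<and> C 0 u = 0 \<and> C u 1 = u \<and> C 1 u = u) \<and>
     (\<forall>u1 u2 v1 v2. 0 \<le> u1 \<longrightarrow> u1 \<le> u2 \<longrightarrow> u2 \<le> 1 \<longrightarrow> 0 \<le> v1 \<longrightarrow> v1 \<le> v2 \<longrightarrow> v2 \<le> 1 \<longrightarrow>
        C u2 v2 - C u2 v1 - C u1 v2 + C u1 v1 \<ge> 0)"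

definition C_volume :: "(real \<Rightarrow> real \<Rightarrow> real) \<Rightarrow> real \<Rightarrow> real \<Rightarrow> real \<Rightarrow> real \<Rightarrow> real" where
  "C_volume C u1 u2 v1 v2 = C u2 v2 - C u2 v1 - C u1 v2 + C u1 v1"

definition cond_prob :: "'a measure \<Rightarrow> 'a set \<Rightarrow> 'a set \<Rightarrow> real" where
  "cond_prob M A B = measure M (A \<inter> B) / measure M B"

definition qevent :: "'a measure \<Rightarrow> ('a \<Rightarrow> real) \<Rightarrow> (real \<Rightarrow> real) \<Rightarrow> real \<Rightarrow> real \<Rightarrow> 'a set" where
  "qevent M Z F a b = {\<omega> \<in> space M. quantile F a < ereal (Z \<omega>) \<and> ereal (Z \<omega>) \<le> quantile F b}"

end

(* For a continuous distribution function F and u in [0,1], the quantile F^-1(u) is either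
   a point x with F x = u, or -infinity (u = 0), or +infinity (u = 1).  Hence the event
   X <= F^-1(u) has probability u and, by the boundary conditions of the copula,
   P(X <= F^-1(u), Y <= G^-1(v)) = C(u,v) for all u, v.  Inclusion-exclusion then shows
   that for every t > 0 the two conditioning events have probabilities (p+t)^- - (p-t)^+
   and (q+t)^- - (q-t)^+, and their intersection has probability the C-volume of the
   rectangle.  So the conditional probabilities coincide with the quotients for all t > 0,
   and one tends to L iff the other does. *)

theory Submission
  imports Defs
begin

lemma Inf_range_ereal: "(INF x. ereal x) = -\<infinity>"
  unfolding bot_ereal_def[symmetric] INF_eq_bot_iff by (meson ereal_dense2 UNIV_I)

lemma quantile_mono: "a \<le> b \<Longrightarrow> quantile F a \<le> quantile F b"
  unfolding quantile_def by (rule Inf_superset_mono) auto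

lemma quantile_cases:
  fixes F :: "real \<Rightarrow> real"
  assumes mono: "mono F" and cont: "continuous_on UNIV F"
    and bot: "(F \<longlongrightarrow> 0) at_bot" and top: "(F \<longlongrightarrow> 1) at_top"
    and "0 \<le> u" "u \<le> 1"
  shows "(quantile F u = \<infinity> \<and> u = 1) \<or> (quantile F u = -\<infinity> \<and> u = 0)
    \<or> (\<exists>x. quantile F u = ereal x \<and> F x = u)"
proof -
  define A where "A = {x. u \<le> F x}"
  have q: "quantile F u = (INF x\<in>A. ereal x)"
    unfolding A_def quantile_def by (simp add: setcompr_eq_image)
  consider (empty) "A = {}" | (full) "A = UNIV" | (proper) x1 x2 where "x1 \<in> A" "x2 \<notin> A"
    by blast
  then show ?thesis
  proof cases
    case empty
    then have "F x \<le> u" for x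
      unfolding A_def by (metis empty_Collect_eq nle_le)
    then have "1 \<le> u"
      by (intro tendsto_upperbound[OF top] always_eventually) auto
    then show ?thesis using empty \<open>u \<le> 1\<close> q by (simp add: top_ereal_def)
  next
    case full
    then have "u \<le> 0"
      by (intro tendsto_lowerbound[OF bot] always_eventually) (auto simp: A_def)
    then show ?thesis using full \<open>0 \<le> u\<close> q Inf_range_ereal by simp
  next
    case proper
    have below: "x2 \<le> x" if "x \<in> A" for x
      using that \<open>x2 \<notin> A\<close> monoD[OF mono, of x x2] by (force simp: A_def)
    then have bdd: "bdd_below A" by (rule bdd_belowI)
    define x0 where "x0 = Inf A"
    have "closed A"
      unfolding A_def by (intro closed_Collect_le continuous_intros cont)
    then have "x0 \<in> A"
      unfolding x0_def using proper bdd by (intro closed_contains_Inf) auto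
    \<comment> \<open>F crosses u between x2 and x0, and no point below x0 lies in A\<close>
    have "x2 \<le> x0"
      unfolding x0_def using proper below by (intro cInf_greatest) auto
    then obtain y where "x2 \<le> y" "y \<le> x0" "F y = u"
      using IVT'[of F x2 u x0] \<open>x0 \<in> A\<close> \<open>x2 \<notin> A\<close> continuous_on_subset[OF cont]
      by (auto simp: A_def)
    moreover have "x0 \<le> y"
      using cInf_lower[OF _ bdd, of y] \<open>F y = u\<close> by (simp add: A_def x0_def)
    moreover have "quantile F u = ereal x0"
      unfolding q x0_def using ereal_Inf'[OF bdd] proper by (metis empty_iff)
    ultimately show ?thesis by (metis order_antisym)
  qed
qed

locale continuous_rv = prob_space M for M :: "'a measure" +
  fixes X :: "'a \<Rightarrow> real" and F :: "real \<Rightarrow> real"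
  assumes X_measurable [measurable]: "X \<in> borel_measurable M"
    and F_eq: "\<And>x. F x = measure M {\<omega> \<in> space M. X \<omega> \<le> x}"
    and F_continuous: "continuous_on UNIV F"
begin

definition le_quantile_event :: "real \<Rightarrow> 'a set" where
  "le_quantile_event u = {\<omega> \<in> space M. ereal (X \<omega>) \<le> quantile F u}"

lemma F_eq_cdf: "F = cdf (distr M borel X)"
proof
  fix x
  have "cdf (distr M borel X) x = measure M (X -` {..x} \<inter> space M)"
    unfolding cdf_def by (rule measure_distr) auto
  also have "X -` {..x} \<inter> space M = {\<omega> \<in> space M. X \<omega> \<le> x}" by auto
  finally show "F x = cdf (distr M borel X) x" using F_eq by simp
qed

lemma le_quantile_event_cases:
  assumes "0 \<le> u" "u \<le> 1"
  shows "(le_quantile_event u = space M \<and> u = 1) \<or> (le_quantile_event u = {} \<and> u = 0)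
    \<or> (\<exists>x. le_quantile_event u = {\<omega> \<in> space M. X \<omega> \<le> x} \<and> F x = u)"
proof -
  interpret D: real_distribution "distr M borel X" by simp
  have "mono F" "(F \<longlongrightarrow> 0) at_bot" "(F \<longlongrightarrow> 1) at_top"
    unfolding F_eq_cdf by (auto intro: monoI D.cdf_nondecreasing D.cdf_lim_at_bot D.cdf_lim_at_top_prob)
  from quantile_cases[OF this(1) F_continuous this(2,3) assms] show ?thesis
    unfolding le_quantile_event_def by auto
qed

lemma sets_le_quantile_event [measurable]: "le_quantile_event u \<in> sets M"
  unfolding le_quantile_event_def by measurable

lemma le_quantile_event_mono: "a \<le> b \<Longrightarrow> le_quantile_event a \<subseteq> le_quantile_event b"
  unfolding le_quantile_event_def using quantile_mono order_trans by blast

lemma prob_le_quantile_event: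
  assumes "0 \<le> u" "u \<le> 1"
  shows "prob (le_quantile_event u) = u"
  using le_quantile_event_cases[OF assms] F_eq by (auto simp: prob_space)

lemma qevent_eq_Diff: "qevent M X F a b = le_quantile_event b - le_quantile_event a"
  unfolding qevent_def le_quantile_event_def by (auto simp: not_le)

lemma prob_qevent:
  assumes "0 \<le> a" "a \<le> b" "b \<le> 1"
  shows "prob (qevent M X F a b) = b - a"
  unfolding qevent_eq_Diff using assms le_quantile_event_mono
  by (simp add: finite_measure_Diff prob_le_quantile_event)

end

lemma prob_le_quantile_event_Int:
  assumes X: "continuous_rv M X F" and Y: "continuous_rv M Y G"
    and C: "is_copula C"
    and H: "\<And>x y. measure M {\<omega> \<in> space M. X \<omega> \<le> x \<and> Y \<omega> \<le> y} = C (F x) (G y)"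
    and u: "0 \<le> u" "u \<le> 1" and v: "0 \<le> v" "v \<le> 1"
  shows "measure M (continuous_rv.le_quantile_event M X F u \<inter> continuous_rv.le_quantile_event M Y G v)
    = C u v"
proof -
  interpret X: continuous_rv M X F by fact
  interpret Y: continuous_rv M Y G by fact
  have C_boundary: "C w 0 = 0" "C 0 w = 0" "C w 1 = w" "C 1 w = w" if "0 \<le> w" "w \<le> 1" for w
    using C that unfolding is_copula_def by auto
  from X.le_quantile_event_cases[OF u] show ?thesis
  proof (elim disjE exE conjE)
    assume "X.le_quantile_event u = space M" "u = 1"
    then show ?thesis
      using Y.prob_le_quantile_event[OF v] C_boundary v by (simp add: Int_absorb1)
  next
    assume "X.le_quantile_event u = {}" "u = 0"
    then show ?thesis using C_boundary v by simp
  next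
    fix x assume x: "X.le_quantile_event u = {\<omega> \<in> space M. X \<omega> \<le> x}" "F x = u"
    from Y.le_quantile_event_cases[OF v] show ?thesis
    proof (elim disjE exE conjE)
      assume "Y.le_quantile_event v = space M" "v = 1"
      then show ?thesis
        using X.prob_le_quantile_event[OF u] C_boundary u by (simp add: Int_absorb2)
    next
      assume "Y.le_quantile_event v = {}" "v = 0"
      then show ?thesis using C_boundary u by simp
    next
      fix y assume "Y.le_quantile_event v = {\<omega> \<in> space M. Y \<omega> \<le> y}" "G y = v"
      then show ?thesis using x H[of x y] by (simp add: Collect_conj_eq[symmetric] conj_ac)
    qed
  qed
qed

lemma measure_Diff_Int_Diff:
  assumes "finite_measure M" "E1 \<subseteq> E2" "K1 \<subseteq> K2"
    "E1 \<in> sets M" "E2 \<in> sets M" "K1 \<in> sets M" "K2 \<in> sets M"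
  shows "measure M ((E2 - E1) \<inter> (K2 - K1)) =
    measure M (E2 \<inter> K2) - measure M (E2 \<inter> K1) - measure M (E1 \<inter> K2) + measure M (E1 \<inter> K1)"
proof -
  interpret finite_measure M by fact
  have "(E2 - E1) \<inter> (K2 - K1) = (E2 \<inter> K2 - E1 \<inter> K2) - (E2 \<inter> K1 - E1 \<inter> K1)"
    using assms by blast
  also have "measure M \<dots> = measure M (E2 \<inter> K2 - E1 \<inter> K2) - measure M (E2 \<inter> K1 - E1 \<inter> K1)"
    by (rule finite_measure_Diff) (use assms in auto)
  also have "measure M (E2 \<inter> K2 - E1 \<inter> K2) = measure M (E2 \<inter> K2) - measure M (E1 \<inter> K2)"
    by (rule finite_measure_Diff) (use assms in auto)
  also have "measure M (E2 \<inter> K1 - E1 \<inter> K1) = measure M (E2 \<inter> K1) - measure M (E1 \<inter> K1)"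
    by (rule finite_measure_Diff) (use assms in auto)
  finally show ?thesis by simp
qed

lemma prob_qevent_Int:
  assumes X: "continuous_rv M X F" and Y: "continuous_rv M Y G"
    and C: "is_copula C"
    and H: "\<And>x y. measure M {\<omega> \<in> space M. X \<omega> \<le> x \<and> Y \<omega> \<le> y} = C (F x) (G y)"
    and "0 \<le> a" "a \<le> b" "b \<le> 1" "0 \<le> a'" "a' \<le> b'" "b' \<le> 1"
  shows "measure M (qevent M X F a b \<inter> qevent M Y G a' b') = C_volume C a b a' b'"
proof -
  interpret X: continuous_rv M X F by fact
  interpret Y: continuous_rv M Y G by fact
  have "X.le_quantile_event a \<subseteq> X.le_quantile_event b" "Y.le_quantile_event a' \<subseteq> Y.le_quantile_event b'"
    using assms by (simp_all add: X.le_quantile_event_mono Y.le_quantile_event_mono)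
  then show ?thesis
    unfolding X.qevent_eq_Diff Y.qevent_eq_Diff C_volume_def using assms
    by (subst measure_Diff_Int_Diff) (auto simp: prob_le_quantile_event_Int[OF X Y C H])
qed

lemma pos_part_le_neg_part:
  assumes "s \<in> {0..1}" "0 \<le> t"
  shows "0 \<le> pos_part (s - t)" "pos_part (s - t) \<le> neg_part (s + t)" "neg_part (s + t) \<le> 1"
  using assms by (auto simp: pos_part_def neg_part_def)

theorem proposition1:
  fixes M :: "'a measure" and X Y :: "'a \<Rightarrow> real"
    and F G :: "real \<Rightarrow> real" and C :: "real \<Rightarrow> real \<Rightarrow> real" and p q L :: real
  assumes "prob_space M"
    and "X \<in> borel_measurable M" and "Y \<in> borel_measurable M"
    and "\<And>x. F x = measure M {\<omega> \<in> space M. X \<omega> \<le> x}"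
    and "\<And>y. G y = measure M {\<omega> \<in> space M. Y \<omega> \<le> y}"
    and "continuous_on UNIV F" and "continuous_on UNIV G"
    and "is_copula C"
    and "\<And>x y. measure M {\<omega> \<in> space M. X \<omega> \<le> x \<and> Y \<omega> \<le> y} = C (F x) (G y)"
    and "p \<in> {0..1}" and "q \<in> {0..1}"
  shows "(((\<lambda>t. cond_prob M (qevent M Y G (pos_part (q - t)) (neg_part (q + t)))
                            (qevent M X F (pos_part (p - t)) (neg_part (p + t))))
            \<longlongrightarrow> L) (at_right 0)
          \<longleftrightarrow>
          ((\<lambda>t. C_volume C (pos_part (p - t)) (neg_part (p + t)) (pos_part (q - t)) (neg_part (q + t))
                / (neg_part (p + t) - pos_part (p - t))) \<longlongrightarrow> L) (at_right 0))
       \<and> (((\<lambda>t. cond_prob M (qevent M X F (pos_part (p - t)) (neg_part (p + t)))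
                            (qevent M Y G (pos_part (q - t)) (neg_part (q + t))))
            \<longlongrightarrow> L) (at_right 0)
          \<longleftrightarrow>
          ((\<lambda>t. C_volume C (pos_part (p - t)) (neg_part (p + t)) (pos_part (q - t)) (neg_part (q + t))
                / (neg_part (q + t) - pos_part (q - t))) \<longlongrightarrow> L) (at_right 0))"
proof -
  have X: "continuous_rv M X F" and Y: "continuous_rv M Y G"
    by (intro continuous_rv.intro continuous_rv_axioms.intro; use assms in simp)+
  have cond_prob_eq:
    "cond_prob M (qevent M Y G a' b') (qevent M X F a b) = C_volume C a b a' b' / (b - a)"
    "cond_prob M (qevent M X F a b) (qevent M Y G a' b') = C_volume C a b a' b' / (b' - a')"
    if "0 \<le> a" "a \<le> b" "b \<le> 1" "0 \<le> a'" "a' \<le> b'" "b' \<le> 1" for a b a' b'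
    using prob_qevent_Int[OF X Y assms(8,9) that] that
      continuous_rv.prob_qevent[OF X] continuous_rv.prob_qevent[OF Y]
    unfolding cond_prob_def by (simp_all add: Int_commute)
  have "\<forall>\<^sub>F t in at_right 0. (0::real) \<le> t"
    using eventually_at_right_less by (rule eventually_mono) simp
  then show ?thesis
    by (intro conjI tendsto_cong; elim eventually_mono;
        intro cond_prob_eq pos_part_le_neg_part assms(10,11))
qed

end
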